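(* Let $\mathcal{A}$ be the cluster algebra of a seed pattern $t\mapsto(\mathbf{x}_t,B_t)$ on $\mathbb{T}_n$, and let $s\overset{k}{-}s'$ be an edge of $\mathbb{T}_n$. If $U\subseteq[\mathbf{x}_s]$ and $U\not\subseteq[\mathbf{x}_{s'}]$, then the Bongartz completion of $U$ with respect to $s'$ is $B_U(s')=[\mathbf{x}_s]$.
   Context: $\mathcal{F}=\mathbb{Q}(x_1,\dots,x_n)$. A labeled seed is a pair $(\mathbf{x},B)$ with $\mathbf{x}=(x_1,\dots,x_n)$ a free generating set of $\mathcal{F}$ and $B=(b_{ij})$ a skew-symmetrizable $n\times n$ integer matrix. Mutation $\mu_k$ gives $(\mathbf{x}',B')$ with $b'_{ij}=-b_{ij}$ if $i=k$ or $j=k$, and $b'_{ij}=b_{ij}+[b_{ik}]_+b_{kj}+b_{ik}[-b_{kj}]_+$ otherwise ($[b]_+=\max(b,0)$); $x'_j=x_j$ for $j\ne k$ and $x'_k=\big(\prod_i x_i^{[b_{ik}]_+}+\prod_i x_i^{[-b_{ik}]_+}\big)/x_k$. $\mathbb{T}_n$ is the $n$-regular tree with edges labeled $1,\dots,n$, the $n$ edges at each vertex having distinct labels; $t\overset{k}{-}t'$ denotes an edge labeled $k$. A seed pattern assigns a labeled seed $(\mathbf{x}_t,B_t)$, $\mathbf{x}_t=(x_{1;t},\dots,x_{n;t})$, $B_t=(b_{ij;t})$, to each $t\in\mathbb{T}_n$ such that seeds at the ends of an edge labeled $k$ are related by $\mu_k$; $\mathcal{A}$ is the $\mathbb{Q}$-algebra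 generated by all cluster variables. The non-labelled cluster is $[\mathbf{x}_t]=\{x_{1;t},\dots,x_{n;t}\}$. For a vertex $r$, the $c$-vectors $\mathbf{c}^{B_r;r}_{j;t}\in\mathbb{Z}^n$ are defined by $\mathbf{c}^{B_r;r}_{j;r}=\mathbf{e}_j$ and, for each edge $t\overset{k}{-}t'$: $\mathbf{c}^{B_r;r}_{k;t'}=-\mathbf{c}^{B_r;r}_{k;t}$ and $\mathbf{c}^{B_r;r}_{j;t'}=\mathbf{c}^{B_r;r}_{j;t}+[b_{kj;t}]_+\mathbf{c}^{B_r;r}_{k;t}+b_{kj;t}[-\mathbf{c}^{B_r;r}_{k;t}]_+$ for $j\ne k$ ($[\cdot]_+$ applied entrywise). For $U$ a subset of some non-labelled cluster and a vertex $r$, a Bongartz completion of $U$ with respect to $r$ is a non-labelled cluster $[\mathbf{x}_t]$ with $U\subseteq[\mathbf{x}_t]$ and $\mathbf{c}^{B_r;r}_{i;t}$ non-negative for every $i$ with $x_{i;t}\notin U$; it is known (Cao–Gyoda–Yurikusa) that it exists and is unique, and it is denoted $B_U(r)$. *)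

theory Defs
  imports Complex_Main "HOL-Library.Poly_Mapping"
begin

text \<open>Multivariate polynomials over Q in variables indexed by nat, as
  finitely supported maps from monomials (exponent vectors) to coefficients.\<close>

definition mpoly_eval :: "((nat \<Rightarrow>\<^sub>0 nat) \<Rightarrow>\<^sub>0 rat) \<Rightarrow> (nat \<Rightarrow> 'a::field_char_0) \<Rightarrow> 'a" where
  "mpoly_eval p x =
     (\<Sum>mon\<in>Poly_Mapping.keys p. of_rat (Poly_Mapping.lookup p mon) * (\<Prod>i\<in>Poly_Mapping.keys (mon::nat \<Rightarrow>\<^sub>0 nat). x i ^ Poly_Mapping.lookup mon i))"

definition alg_indep :: "nat \<Rightarrow> (nat \<Rightarrow> 'a::field_char_0) \<Rightarrow> bool" where
  "alg_indep n x \<longleftrightarrow>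
     (\<forall>p. (\<forall>m\<in>Poly_Mapping.keys p. Poly_Mapping.keys m \<subseteq> {..<n}) \<longrightarrow> mpoly_eval p x = 0 \<longrightarrow> p = 0)"

definition skew_symmetrizable :: "nat \<Rightarrow> (nat \<Rightarrow> nat \<Rightarrow> int) \<Rightarrow> bool" where
  "skew_symmetrizable n b \<longleftrightarrow>
     (\<exists>d::nat \<Rightarrow> int. (\<forall>i<n. d i > 0) \<and> (\<forall>i<n. \<forall>j<n. d i * b i j = - (d j * b j i)))"

definition seed_mut ::
  "nat \<Rightarrow> nat \<Rightarrow> (nat \<Rightarrow> 'a::field) \<Rightarrow> (nat \<Rightarrow> nat \<Rightarrow> int)
       \<Rightarrow> (nat \<Rightarrow> 'a) \<Rightarrow> (nat \<Rightarrow> nat \<Rightarrow> int) \<Rightarrow> bool" where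
  "seed_mut n k x b x' b' \<longleftrightarrow>
     (\<forall>i<n. \<forall>j<n. b' i j =
        (if i = k \<or> j = k then - b i j
         else b i j + max (b i k) 0 * b k j + b i k * max (- b k j) 0)) \<and>
     (\<forall>j<n. j \<noteq> k \<longrightarrow> x' j = x j) \<and>
     x' k = ((\<Prod>i<n. x i ^ nat (b i k)) + (\<Prod>i<n. x i ^ nat (- b i k))) / x k"

text \<open>Vertices are reduced words over the labels {0..<n} (no two equal adjacent
  letters); t and t @ [k] are joined by an edge labelled k.  Each vertex has
  exactly n incident edges, with distinct labels.\<close>

definition tree_vertex :: "nat \<Rightarrow> nat list \<Rightarrow> bool" where
  "tree_vertex n t \<longleftrightarrow> set t \<subseteq> {..<n} \<and> successively (\<noteq>) t"

definition tree_edge :: "nat \<Rightarrow> nat \<Rightarrow> nat list \<Rightarrow> nat list \<Rightarrow> bool" where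
  "tree_edge n k s s' \<longleftrightarrow> tree_vertex n s \<and> tree_vertex n s' \<and> k < n \<and>
     (s' = s @ [k] \<or> s = s' @ [k])"

definition nbr :: "nat list \<Rightarrow> nat \<Rightarrow> nat list" where
  "nbr t k = (if t \<noteq> [] \<and> last t = k then butlast t else t @ [k])"

definition seed_pattern ::
  "nat \<Rightarrow> (nat list \<Rightarrow> nat \<Rightarrow> 'a::field_char_0) \<Rightarrow> (nat list \<Rightarrow> nat \<Rightarrow> nat \<Rightarrow> int) \<Rightarrow> bool" where
  "seed_pattern n X B \<longleftrightarrow>
     (\<forall>t. tree_vertex n t \<longrightarrow> alg_indep n (X t) \<and> skew_symmetrizable n (B t)) \<and>
     (\<forall>k s s'. tree_edge n k s s' \<longrightarrow> seed_mut n k (X s) (B s) (X s') (B s'))"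

definition cluster :: "nat \<Rightarrow> (nat list \<Rightarrow> nat \<Rightarrow> 'a) \<Rightarrow> nat list \<Rightarrow> 'a set" where
  "cluster n X t = X t ` {..<n}"

text \<open>One step of c-vector mutation along an edge labelled k out of a vertex
  with exchange matrix bt; C j i is the i-th entry of the j-th c-vector.\<close>
definition cstep :: "(nat \<Rightarrow> nat \<Rightarrow> int) \<Rightarrow> nat \<Rightarrow> (nat \<Rightarrow> nat \<Rightarrow> int) \<Rightarrow> (nat \<Rightarrow> nat \<Rightarrow> int)" where
  "cstep bt k C = (\<lambda>j i. if j = k then - C k i
      else C j i + max (bt k j) 0 * C k i + bt k j * max (- C k i) 0)"

fun cwalk :: "(nat list \<Rightarrow> nat \<Rightarrow> nat \<Rightarrow> int) \<Rightarrow> (nat \<Rightarrow> nat \<Rightarrow> int) \<Rightarrow> nat list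
               \<Rightarrow> nat list \<Rightarrow> (nat \<Rightarrow> nat \<Rightarrow> int)" where
  "cwalk B C t [] = C"
| "cwalk B C t (k # ks) = cwalk B (cstep (B t) k C) (nbr t k) ks"

fun lcp :: "nat list \<Rightarrow> nat list \<Rightarrow> nat list" where
  "lcp (a # as) (b # bs) = (if a = b then a # lcp as bs else [])"
| "lcp _ _ = []"

text \<open>Edge labels of the geodesic from r to t in T_n.\<close>
definition path_labels :: "nat list \<Rightarrow> nat list \<Rightarrow> nat list" where
  "path_labels r t = (let m = length (lcp r t) in rev (drop m r) @ drop m t)"

text \<open>cvec B r t j i = i-th entry of c^{B_r;r}_{j;t}.\<close>
definition cvec :: "(nat list \<Rightarrow> nat \<Rightarrow> nat \<Rightarrow> int) \<Rightarrow> nat list \<Rightarrow> nat list \<Rightarrow> nat \<Rightarrow> nat \<Rightarrow> int" where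
  "cvec B r t = cwalk B (\<lambda>j i. if i = j then 1 else 0) r (path_labels r t)"

definition is_bongartz_completion ::
  "nat \<Rightarrow> (nat list \<Rightarrow> nat \<Rightarrow> 'a) \<Rightarrow> (nat list \<Rightarrow> nat \<Rightarrow> nat \<Rightarrow> int) \<Rightarrow> 'a set \<Rightarrow> nat list \<Rightarrow> 'a set \<Rightarrow> bool" where
  "is_bongartz_completion n X B U r Cl \<longleftrightarrow>
     (\<exists>t. tree_vertex n t \<and> Cl = cluster n X t \<and> U \<subseteq> Cl \<and>
        (\<forall>i<n. X t i \<notin> U \<longrightarrow> (\<forall>l<n. cvec B r t i l \<ge> 0)))"

end

theory Submission
  imports Defs
begin

text \<open>Mutation at \<open>k\<close> exchanges only the cluster variable \<open>x\<^sub>k\<^sub>;\<^sub>s\<close>, so a subset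
  \<open>U\<close> of \<open>[x\<^sub>s]\<close> that is not contained in the adjacent cluster must contain it. The
  \<open>c\<close>-vectors of \<open>s\<close> with respect to \<open>s'\<close> arise from the standard basis by a single
  mutation at \<open>k\<close>, which gives \<open>c\<^sub>j = e\<^sub>j + [b\<^sub>k\<^sub>j]\<^sub>+ e\<^sub>k \<ge> 0\<close> for every \<open>j \<noteq> k\<close>.\<close>

lemma lcp_append_right: "lcp xs (xs @ ys) = xs"
  by (induction xs) auto

lemma lcp_append_left: "lcp (xs @ ys) xs = xs"
  by (induction xs) auto

lemma tree_edge_commute: "tree_edge n k s s' \<Longrightarrow> tree_edge n k s' s"
  by (auto simp: tree_edge_def)

lemma path_labels_edge:
  assumes "tree_edge n k r t"
  shows "path_labels r t = [k]"
proof -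
  have "t = r @ [k] \<or> r = t @ [k]"
    using assms by (auto simp: tree_edge_def)
  then show ?thesis
    by (auto simp: path_labels_def lcp_append_right lcp_append_left)
qed

lemma cvec_edge:
  assumes "tree_edge n k r t"
  shows "cvec B r t = cstep (B r) k (\<lambda>j i. if i = j then 1 else 0)"
  by (simp add: cvec_def path_labels_edge[OF assms])

lemma cvec_edge_nonneg:
  assumes "tree_edge n k r t" and "j \<noteq> k"
  shows "0 \<le> cvec B r t j i"
  using assms(2) by (simp add: cvec_edge[OF assms(1)] cstep_def)

lemma seed_mut_keeps_other_variables:
  assumes "seed_mut n k x b x' b'" and "j < n" and "j \<noteq> k"
  shows "x' j = x j"
  using assms by (simp add: seed_mut_def)

lemma cluster_diff_edge:
  assumes "seed_pattern n X B" and "tree_edge n k s s'"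
  shows "cluster n X s - cluster n X s' \<subseteq> {X s k}"
proof
  fix u assume u: "u \<in> cluster n X s - cluster n X s'"
  then obtain j where j: "j < n" "u = X s j"
    by (auto simp: cluster_def)
  have mut: "seed_mut n k (X s) (B s) (X s') (B s')"
    using assms by (simp add: seed_pattern_def)
  have "j = k"
  proof (rule ccontr)
    assume "j \<noteq> k"
    then have "u = X s' j"
      using seed_mut_keeps_other_variables[OF mut j(1)] j(2) by simp
    with u j(1) show False
      by (simp add: cluster_def)
  qed
  with j show "u \<in> {X s k}" by simp
qed

theorem lemma3p9:
  fixes n :: nat
    and X :: "nat list \<Rightarrow> nat \<Rightarrow> 'a::field_char_0"
    and B :: "nat list \<Rightarrow> nat \<Rightarrow> nat \<Rightarrow> int"
  assumes "seed_pattern n X B"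
    and "tree_edge n k s s'"
    and "U \<subseteq> cluster n X s"
    and "\<not> U \<subseteq> cluster n X s'"
  shows "is_bongartz_completion n X B U s' (cluster n X s)"
proof -
  have exchanged_in_U: "X s k \<in> U"
    using assms(3,4) cluster_diff_edge[OF assms(1,2)] by blast
  have "0 \<le> cvec B s' s j l" if "X s j \<notin> U" for j l
    using that exchanged_in_U cvec_edge_nonneg[OF tree_edge_commute[OF assms(2)]] by metis
  moreover have "tree_vertex n s"
    using assms(2) by (simp add: tree_edge_def)
  ultimately show ?thesis
    using assms(3) by (auto simp: is_bongartz_completion_def)
qed

end
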